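(* Let $(B,\mathbb{T},\omega)$ be a $C^*$-dynamical system, and suppose that $A$ is a maximal (abelian $\mathbb{T}$-invariant $*$-subalgebra) of $B$. Then $A$ is a maximal abelian subalgebra of $B$.
   Context: A $C^*$-dynamical system $(B,\mathbb{T},\omega)$ consists of a $C^*$-algebra $B$ and a homomorphism $\omega:\mathbb{T}\to\mathrm{Aut}(B)$ such that $t\mapsto\omega_t(b)$ is norm-continuous for each $b\in B$. A $*$-subalgebra $A\subset B$ is $\mathbb{T}$-invariant if $\omega_t(a)\in A$ for all $a\in A$, $t\in\mathbb{T}$. A maximal (abelian $\mathbb{T}$-invariant $*$-subalgebra) is a $*$-subalgebra of $B$ which is abelian and $\mathbb{T}$-invariant and is maximal (under inclusion) among all abelian $\mathbb{T}$-invariant $*$-subalgebras of $B$. *)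

theory Defs
  imports "HOL-Analysis.Analysis"
begin

text \<open>A C*-algebra structure on the whole type 'a: a Banach algebra (real-normed,
  complete, associative, possibly non-unital) with a complex scalar multiplication
  sc extending the real one, and an involution st satisfying the C*-identity.\<close>

definition cstar_algebra ::
  "(complex \<Rightarrow> 'a::{real_normed_algebra,banach} \<Rightarrow> 'a) \<Rightarrow> ('a \<Rightarrow> 'a) \<Rightarrow> bool" where
  "cstar_algebra sc st \<longleftrightarrow>
     (\<forall>c x y. sc c (x + y) = sc c x + sc c y) \<and>
     (\<forall>c d x. sc (c + d) x = sc c x + sc d x) \<and>
     (\<forall>c d x. sc c (sc d x) = sc (c * d) x) \<and>
     (\<forall>r x. sc (complex_of_real r) x = scaleR r x) \<and>
     (\<forall>c x. norm (sc c x) = cmod c * norm x) \<and>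
     (\<forall>c x y. sc c (x * y) = sc c x * y) \<and>
     (\<forall>c x y. sc c (x * y) = x * sc c y) \<and>
     (\<forall>x y. st (x + y) = st x + st y) \<and>
     (\<forall>c x. st (sc c x) = sc (cnj c) (st x)) \<and>
     (\<forall>x y. st (x * y) = st y * st x) \<and>
     (\<forall>x. st (st x) = x) \<and>
     (\<forall>x. norm (st x * x) = (norm x)\<^sup>2)"

definition star_automorphism ::
  "(complex \<Rightarrow> 'a::{real_normed_algebra,banach} \<Rightarrow> 'a) \<Rightarrow> ('a \<Rightarrow> 'a) \<Rightarrow> ('a \<Rightarrow> 'a) \<Rightarrow> bool" where
  "star_automorphism sc st f \<longleftrightarrow> bij f \<and>
     (\<forall>x y. f (x + y) = f x + f y) \<and>
     (\<forall>c x. f (sc c x) = sc c (f x)) \<and>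
     (\<forall>x y. f (x * y) = f x * f y) \<and>
     (\<forall>x. f (st x) = st (f x))"

definition circle :: "complex set" where
  "circle = {z. cmod z = 1}"

text \<open>A C*-dynamical system (B, T, omega): omega is a homomorphism from T into Aut(B)
  (values outside T are irrelevant), pointwise norm-continuous.\<close>
definition cstar_dynamical_system ::
  "(complex \<Rightarrow> 'a::{real_normed_algebra,banach} \<Rightarrow> 'a) \<Rightarrow> ('a \<Rightarrow> 'a) \<Rightarrow> (complex \<Rightarrow> 'a \<Rightarrow> 'a) \<Rightarrow> bool" where
  "cstar_dynamical_system sc st \<omega> \<longleftrightarrow> cstar_algebra sc st \<and>
     (\<forall>t\<in>circle. star_automorphism sc st (\<omega> t)) \<and>
     (\<forall>s\<in>circle. \<forall>t\<in>circle. \<omega> (s * t) = \<omega> s \<circ> \<omega> t) \<and>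
     (\<forall>b. continuous_on circle (\<lambda>t. \<omega> t b))"

definition subalgebra ::
  "(complex \<Rightarrow> 'a::{real_normed_algebra,banach} \<Rightarrow> 'a) \<Rightarrow> 'a set \<Rightarrow> bool" where
  "subalgebra sc A \<longleftrightarrow> 0 \<in> A \<and>
     (\<forall>x\<in>A. \<forall>y\<in>A. x + y \<in> A) \<and>
     (\<forall>c. \<forall>x\<in>A. sc c x \<in> A) \<and>
     (\<forall>x\<in>A. \<forall>y\<in>A. x * y \<in> A)"

definition star_subalgebra ::
  "(complex \<Rightarrow> 'a::{real_normed_algebra,banach} \<Rightarrow> 'a) \<Rightarrow> ('a \<Rightarrow> 'a) \<Rightarrow> 'a set \<Rightarrow> bool" where
  "star_subalgebra sc st A \<longleftrightarrow> subalgebra sc A \<and> (\<forall>x\<in>A. st x \<in> A)"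

definition abelian :: "'a::times set \<Rightarrow> bool" where
  "abelian A \<longleftrightarrow> (\<forall>x\<in>A. \<forall>y\<in>A. x * y = y * x)"

definition T_invariant :: "(complex \<Rightarrow> 'a \<Rightarrow> 'a) \<Rightarrow> 'a set \<Rightarrow> bool" where
  "T_invariant \<omega> A \<longleftrightarrow> (\<forall>t\<in>circle. \<forall>a\<in>A. \<omega> t a \<in> A)"

definition maximal_abelian_invariant_star_subalgebra ::
  "(complex \<Rightarrow> 'a::{real_normed_algebra,banach} \<Rightarrow> 'a) \<Rightarrow> ('a \<Rightarrow> 'a) \<Rightarrow> (complex \<Rightarrow> 'a \<Rightarrow> 'a) \<Rightarrow> 'a set \<Rightarrow> bool" where
  "maximal_abelian_invariant_star_subalgebra sc st \<omega> A \<longleftrightarrow>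
     star_subalgebra sc st A \<and> abelian A \<and> T_invariant \<omega> A \<and>
     (\<forall>C. star_subalgebra sc st C \<and> abelian C \<and> T_invariant \<omega> C \<and> A \<subseteq> C \<longrightarrow> C = A)"

definition maximal_abelian_subalgebra ::
  "(complex \<Rightarrow> 'a::{real_normed_algebra,banach} \<Rightarrow> 'a) \<Rightarrow> 'a set \<Rightarrow> bool" where
  "maximal_abelian_subalgebra sc A \<longleftrightarrow>
     subalgebra sc A \<and> abelian A \<and>
     (\<forall>C. subalgebra sc C \<and> abelian C \<and> A \<subseteq> C \<longrightarrow> C = A)"

end

theory Submission
  imports Defs
begin

text \<open>If \<open>C \<supseteq> A\<close> is an abelian subalgebra then \<open>C\<close> lies in the commutant \<open>A'\<close>, so it
  suffices to show \<open>A' \<subseteq> A\<close>. Maximality gives \<open>A = A' \<inter> A''\<close>, so \<open>A\<close> is norm closed, and it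
  absorbs every \<open>y \<in> A'\<close> which is an eigenvector of all \<open>\<omega>\<^sub>t\<close> with unimodular eigenvalues:
  \<open>y\<^sup>*y\<close> and \<open>yy\<^sup>*\<close> are \<open>\<omega>\<close>-fixed, hence in \<open>A\<close>, which forces \<open>y\<close> to be normal, and then
  \<open>A + \<complex>y + \<complex>y\<^sup>*\<close> is again abelian, selfadjoint and invariant. The Fourier coefficients
  \<open>\<integral> e\<^bsup>-imt\<^esup> \<omega>\<^bsub>e\<^bsup>it\<^esup>\<^esub>(x) dt\<close> of \<open>x \<in> A'\<close> are such eigenvectors, and their Cesaro means, the
  Fejer means of the orbit of \<open>x\<close>, converge to \<open>x\<close>.

  Moving \<open>\<omega>\<^sub>t\<close> through these integrals needs \<open>\<omega>\<^sub>t\<close> to be bounded. *-homomorphisms are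
  contractive; without a unit or spectral theory this follows from the existence of
  \<open>\<surd>(1 - h\<^sup>2)\<close> for selfadjoint \<open>h\<close> with \<open>\<parallel>h\<parallel> < 1\<close>, obtained from Banach's fixed point theorem.\<close>

section \<open>Contractivity of *-homomorphisms\<close>

definition star_hom ::
  "(complex \<Rightarrow> 'a::{real_normed_algebra,banach} \<Rightarrow> 'a) \<Rightarrow> ('a \<Rightarrow> 'a) \<Rightarrow> ('a \<Rightarrow> 'a) \<Rightarrow> bool" where
  "star_hom sc st \<phi> \<longleftrightarrow>
     (\<forall>x y. \<phi> (x + y) = \<phi> x + \<phi> y) \<and>
     (\<forall>c x. \<phi> (sc c x) = sc c (\<phi> x)) \<and>
     (\<forall>x y. \<phi> (x * y) = \<phi> x * \<phi> y) \<and>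
     (\<forall>x. \<phi> (st x) = st (\<phi> x))"

lemma star_automorphism_imp_star_hom: "star_automorphism sc st f \<Longrightarrow> star_hom sc st f"
  unfolding star_automorphism_def star_hom_def by blast

lemma norm_square_diff_le:
  fixes x y :: "'a::real_normed_algebra"
  assumes "norm x \<le> r" and "norm y \<le> r"
  shows "norm (y * y - x * x) \<le> 2 * r * norm (y - x)"
proof -
  have "norm (y * y - x * x) = norm (y * (y - x) + (y - x) * x)" by (simp add: algebra_simps)
  also have "\<dots> \<le> norm y * norm (y - x) + norm (y - x) * norm x"
    by (intro norm_triangle_le add_mono norm_mult_ineq)
  also have "\<dots> \<le> r * norm (y - x) + norm (y - x) * r"
    using assms by (intro add_mono mult_right_mono mult_left_mono) auto
  finally show ?thesis by simp
qed

locale cstar =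
  fixes sc :: "complex \<Rightarrow> 'a::{real_normed_algebra,banach} \<Rightarrow> 'a" and st :: "'a \<Rightarrow> 'a"
  assumes cstar_algebra: "cstar_algebra sc st"
begin

lemma sc_add: "sc c (x + y) = sc c x + sc c y"
  and sc_add_left: "sc (c + d) x = sc c x + sc d x"
  and sc_sc: "sc c (sc d x) = sc (c * d) x"
  and sc_of_real: "sc (complex_of_real r) x = r *\<^sub>R x"
  and norm_sc: "norm (sc c x) = cmod c * norm x"
  and sc_mult_left: "sc c x * y = sc c (x * y)"
  and sc_mult_right: "x * sc c y = sc c (x * y)"
  and st_add: "st (x + y) = st x + st y"
  and st_sc: "st (sc c x) = sc (cnj c) (st x)"
  and st_mult: "st (x * y) = st y * st x"
  and st_st: "st (st x) = x"
  and norm_st_mult_self: "norm (st x * x) = (norm x)\<^sup>2"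
  using cstar_algebra unfolding cstar_algebra_def by (blast | metis)+

lemma sc_zero_left: "sc 0 x = 0"
  using sc_of_real[of 0 x] by simp

lemma sc_one: "sc 1 x = x"
  using sc_of_real[of 1 x] by simp

lemma sc_minus_left: "sc (- c) x = - sc c x"
  using sc_add_left[of c "- c" x] by (simp add: sc_zero_left add_eq_0_iff)

lemma sc_scaleR: "sc c (r *\<^sub>R x) = r *\<^sub>R sc c x"
  by (metis sc_of_real sc_sc mult.commute)

lemma sc_sum_left: "sc (sum f I) x = (\<Sum>i\<in>I. sc (f i) x)"
  by (induction I rule: infinite_finite_induct) (auto simp: sc_zero_left sc_add_left)

lemma st_zero: "st 0 = 0"
  using st_add[of 0 0] by simp

lemma st_minus: "st (- x) = - st x"
  using st_add[of x "- x"] by (simp add: st_zero add_eq_0_iff)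

lemma st_diff: "st (x - y) = st x - st y"
  using st_add[of x "- y"] by (simp add: st_minus)

lemma st_scaleR: "st (r *\<^sub>R x) = r *\<^sub>R st x"
  by (metis st_sc sc_of_real complex_cnj_complex_of_real)

lemma norm_st: "norm (st x) = norm x"
proof -
  have le: "norm y \<le> norm (st y)" for y
  proof (cases "y = 0")
    case False
    have "(norm y)\<^sup>2 \<le> norm (st y) * norm y"
      using norm_st_mult_self[of y] norm_mult_ineq[of "st y" y] by simp
    then show ?thesis using False by (simp add: power2_eq_square)
  qed simp
  show ?thesis using le[of x] le[of "st x"] by (simp add: st_st)
qed

lemma bounded_linear_sc: "bounded_linear (sc c)"
  by (rule bounded_linear_intro[where K = "cmod c"]) (auto simp: sc_add sc_scaleR norm_sc)

lemma continuous_on_st: "continuous_on S st"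
  by (rule linear_continuous_on, rule bounded_linear_intro[where K = 1])
     (auto simp: st_add st_scaleR norm_st)

lemma sc_eq_Re_Im: "sc c x = Re c *\<^sub>R x + Im c *\<^sub>R sc \<i> x"
proof -
  have "c = complex_of_real (Re c) + complex_of_real (Im c) * \<i>"
    by (simp add: complex_eq_iff)
  then have "sc c x = sc (complex_of_real (Re c)) x + sc (complex_of_real (Im c)) (sc \<i> x)"
    by (metis sc_add_left sc_sc)
  then show ?thesis by (simp add: sc_of_real)
qed

lemma continuous_on_sc [continuous_intros]:
  assumes "continuous_on S c" and "continuous_on S f"
  shows "continuous_on S (\<lambda>t. sc (c t) (f t))"
proof -
  have "continuous_on S (\<lambda>t. sc \<i> (f t))"
    by (rule bounded_linear.continuous_on[OF bounded_linear_sc assms(2)])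
  then have "continuous_on S (\<lambda>t. Re (c t) *\<^sub>R f t + Im (c t) *\<^sub>R sc \<i> (f t))"
    using assms by (intro continuous_intros)
  then show ?thesis by (simp only: sc_eq_Re_Im[symmetric])
qed

lemma selfadjoint_square_eq_zero: "st d = d \<Longrightarrow> d * d = 0 \<Longrightarrow> d = 0"
  using norm_st_mult_self[of d] by simp

text \<open>Since \<open>'a\<close> need not have a unit, \<open>unit_circle_pair g k\<close> encodes
  \<open>(1 + g)\<^sup>2 + k\<^sup>2 = 1\<close> for commuting selfadjoint \<open>1 + g\<close> and \<open>k\<close> in the unitization.\<close>

definition unit_circle_pair :: "'a \<Rightarrow> 'a \<Rightarrow> bool" where
  "unit_circle_pair g k \<longleftrightarrow> st g = g \<and> st k = k \<and> g * k = k * g \<and> g * g + g + g + k * k = 0"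

text \<open>\<open>k + c (1 + g)\<close> is an isometry of the unitization for \<open>c = \<plusminus>\<i>\<close>.\<close>

lemma unit_circle_pair_st_mult_self:
  assumes "unit_circle_pair g k" and "c + cnj c = 0" and "cnj c * c = 1"
  shows "st (k * b + sc c (b + g * b)) * (k * b + sc c (b + g * b)) = st b * b"
proof -
  have gs: "st g = g" and ks: "st k = k" and gk: "g * k = k * g"
    and rel: "g * g + g + g + k * k = 0"
    using assms(1) by (auto simp: unit_circle_pair_def)
  define u where "u = b + g * b"
  have stu: "st u = st b + st b * g" by (simp add: u_def st_add st_mult gs)
  have mixed: "st u * (k * b) = st b * k * u"
  proof -
    have "st u * (k * b) = st b * k * b + st b * (g * k) * b"
      by (simp add: stu algebra_simps)
    then show ?thesis by (simp add: gk u_def algebra_simps)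
  qed
  have "st (k * b + sc c u) * (k * b + sc c u)
      = (st b * k + sc (cnj c) (st u)) * (k * b + sc c u)"
    by (simp add: st_add st_mult st_sc ks)
  also have "\<dots> = st b * k * (k * b) + st b * k * sc c u + sc (cnj c) (st u) * (k * b)
      + sc (cnj c) (st u) * sc c u"
    by (simp add: algebra_simps)
  also have "\<dots> = st b * k * (k * b) + sc c (st b * k * u) + sc (cnj c) (st u * (k * b))
      + sc (cnj c * c) (st u * u)"
    by (simp only: sc_mult_left sc_mult_right sc_sc mult.commute[of c "cnj c"])
  also have "\<dots> = st b * k * (k * b) + sc (c + cnj c) (st b * k * u) + sc (cnj c * c) (st u * u)"
    by (simp add: mixed sc_add_left)
  also have "\<dots> = st b * k * (k * b) + st u * u"
    by (simp add: assms(2,3) sc_zero_left sc_one)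
  also have "\<dots> = st b * b + st b * (g * g + g + g + k * k) * b"
    unfolding stu by (simp add: u_def algebra_simps)
  finally show ?thesis by (simp add: rel u_def)
qed

lemma norm_mult_le_unit_circle_pair:
  assumes "unit_circle_pair g k"
  shows "norm (k * b) \<le> norm b"
proof -
  define w where "w c = k * b + sc c (b + g * b)" for c
  have norm_w: "norm (w c) = norm b" if "c + cnj c = 0" and "cnj c * c = 1" for c
    using unit_circle_pair_st_mult_self[OF assms that, of b] norm_st_mult_self[of "w c"]
      norm_st_mult_self[of b]
    by (metis w_def norm_ge_zero power2_eq_imp_eq)
  have "k * b = (1/2) *\<^sub>R (w \<i> + w (- \<i>))"
    by (simp add: w_def sc_minus_left scaleR_add_right[symmetric])
  then have "norm (k * b) \<le> (1/2) * (norm (w \<i>) + norm (w (- \<i>)))"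
    using norm_triangle_ineq[of "w \<i>" "w (- \<i>)"] by simp
  also have "\<dots> = norm b"
    using norm_w[of \<i>] norm_w[of "- \<i>"] by simp
  finally show ?thesis .
qed

lemma closed_selfadjoint_commuting_cball: "closed {c. norm c \<le> r \<and> st c = c \<and> c * h = h * c}"
proof -
  have "{c. norm c \<le> r \<and> st c = c \<and> c * h = h * c}
      = cball 0 r \<inter> {c. st c = c} \<inter> {c. c * h = h * c}"
    by auto
  moreover have "closed {c. st c = c}"
    by (rule closed_Collect_eq) (auto simp: continuous_on_st)
  moreover have "closed {c. c * h = h * c}"
    by (rule closed_Collect_eq) (auto intro!: continuous_intros)
  ultimately show ?thesis by auto
qed

text \<open>The pair is \<open>(\<surd>(1 - h\<^sup>2) - 1, h)\<close>; the first entry is the fixed point of the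
  contraction \<open>c \<mapsto> -(h\<^sup>2 + c\<^sup>2)/2\<close> on the selfadjoint elements commuting with \<open>h\<close>
  of norm at most \<open>r = (1 + \<parallel>h\<^sup>2\<parallel>)/2 < 1\<close>.\<close>

lemma exists_unit_circle_pair:
  assumes hs: "st h = h" and hn: "norm h < 1"
  shows "\<exists>g. unit_circle_pair g h"
proof -
  define q where "q = norm (h * h)"
  have q0: "0 \<le> q" by (simp add: q_def)
  have "q \<le> norm h * norm h" unfolding q_def by (rule norm_mult_ineq)
  also have "\<dots> < 1" using hn mult_strict_mono[of "norm h" 1 "norm h" 1] by simp
  finally have q1: "q < 1" .
  define r where "r = (1 + q) / 2"
  have r0: "0 \<le> r" and r1: "r < 1" and qr: "q \<le> r" using q0 q1 by (auto simp: r_def)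
  define S where "S = {c. norm c \<le> r \<and> st c = c \<and> c * h = h * c}"
  define f where "f c = - ((1/2) *\<^sub>R (h * h + c * c))" for c
  have "complete S" unfolding S_def by (simp add: complete_eq_closed closed_selfadjoint_commuting_cball)
  moreover have "S \<noteq> {}" using r0 by (auto simp: S_def st_zero intro!: exI[of _ 0])
  moreover have "f ` S \<subseteq> S"
  proof safe
    fix c assume "c \<in> S"
    then have cn: "norm c \<le> r" and cs: "st c = c" and ch: "c * h = h * c"
      by (auto simp: S_def)
    have "norm (f c) \<le> (1/2) * (q + norm c * norm c)"
      using norm_triangle_ineq[of "h * h" "c * c"] norm_mult_ineq[of c c]
      by (simp add: f_def q_def)
    also have "\<dots> \<le> (1/2) * (q + r * r)" using cn by (simp add: mult_mono')
    also have "\<dots> \<le> r" using qr r0 r1 mult_left_le_one_le[of r r] by simp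
    finally have "norm (f c) \<le> r" .
    moreover have "st (f c) = f c" by (simp add: f_def st_minus st_scaleR st_add st_mult hs cs)
    moreover have "f c * h = h * f c"
      using ch by (simp add: f_def algebra_simps) (metis mult.assoc)
    ultimately show "f c \<in> S" by (simp add: S_def)
  qed
  moreover have "dist (f x) (f y) \<le> r * dist x y" if "x \<in> S" "y \<in> S" for x y
  proof -
    have "f x - f y = (1/2) *\<^sub>R (y * y - x * x)" by (simp add: f_def algebra_simps)
    moreover have "norm (y * y - x * x) \<le> 2 * r * norm (y - x)"
      using that by (intro norm_square_diff_le) (auto simp: S_def)
    ultimately show ?thesis by (simp add: dist_norm norm_minus_commute)
  qed
  ultimately obtain g where g: "g \<in> S" "f g = g" using Banach_fix[OF _ _ r0 r1] by blast
  have "h * h + g * g = (- 2) *\<^sub>R f g" by (simp add: f_def)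
  then have "g * g + g + g + h * h = 0" using g(2) by (simp add: scaleR_2 algebra_simps)
  then show ?thesis using g(1) hs by (auto simp: S_def unit_circle_pair_def)
qed

lemma star_hom_zero: "star_hom sc st \<phi> \<Longrightarrow> \<phi> 0 = 0"
  unfolding star_hom_def by (metis add_cancel_right_right)

lemma star_hom_scaleR: "star_hom sc st \<phi> \<Longrightarrow> \<phi> (r *\<^sub>R x) = r *\<^sub>R \<phi> x"
  unfolding star_hom_def by (metis sc_of_real)

lemma star_hom_unit_circle_pair:
  assumes "star_hom sc st \<phi>" and "unit_circle_pair g k"
  shows "unit_circle_pair (\<phi> g) (\<phi> k)"
proof -
  have "\<phi> (g * g + g + g + k * k) = \<phi> g * \<phi> g + \<phi> g + \<phi> g + \<phi> k * \<phi> k"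
    using assms(1) by (simp add: star_hom_def)
  then show ?thesis
    using assms star_hom_zero[OF assms(1)] unfolding unit_circle_pair_def star_hom_def by metis
qed

lemma star_hom_norm_le_one:
  assumes \<phi>: "star_hom sc st \<phi>" and "st h = h" and "norm h < 1"
  shows "norm (\<phi> h) \<le> 1"
proof -
  obtain g where "unit_circle_pair g h" using exists_unit_circle_pair assms(2,3) by blast
  then have pair: "unit_circle_pair (\<phi> g) (\<phi> h)" by (rule star_hom_unit_circle_pair[OF \<phi>])
  then have "norm (\<phi> h * \<phi> h) \<le> norm (\<phi> h)" by (rule norm_mult_le_unit_circle_pair)
  moreover have "norm (\<phi> h * \<phi> h) = norm (\<phi> h) * norm (\<phi> h)"
    using pair norm_st_mult_self[of "\<phi> h"] by (simp add: unit_circle_pair_def power2_eq_square)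
  ultimately show ?thesis by (cases "\<phi> h = 0") auto
qed

lemma star_hom_norm_le:
  assumes \<phi>: "star_hom sc st \<phi>"
  shows "norm (\<phi> x) \<le> norm x"
proof -
  have selfadjoint: "norm (\<phi> h) \<le> norm h" if hs: "st h = h" for h
  proof (rule dense_ge)
    fix s assume s: "norm h < s"
    then have s0: "0 < s" using norm_ge_zero[of h] by linarith
    have "norm (\<phi> ((1 / s) *\<^sub>R h)) \<le> 1"
      using s s0 by (intro star_hom_norm_le_one[OF \<phi>]) (auto simp: st_scaleR hs pos_divide_less_eq)
    then show "norm (\<phi> h) \<le> s"
      using s0 by (simp add: star_hom_scaleR[OF \<phi>] divide_le_eq)
  qed
  have "(norm (\<phi> x))\<^sup>2 = norm (\<phi> (st x * x))"
    using \<phi> norm_st_mult_self[of "\<phi> x"] by (simp add: star_hom_def)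
  also have "\<dots> \<le> (norm x)\<^sup>2"
    using selfadjoint[of "st x * x"] by (simp add: st_mult st_st norm_st_mult_self)
  finally show ?thesis by (rule power2_le_imp_le) simp
qed

lemma bounded_linear_star_hom: "star_hom sc st \<phi> \<Longrightarrow> bounded_linear \<phi>"
  by (rule bounded_linear_intro[where K = 1])
     (auto simp: star_hom_scaleR star_hom_norm_le, simp add: star_hom_def)

end

definition commutant :: "'a::times set \<Rightarrow> 'a set" where
  "commutant X = {y. \<forall>x\<in>X. y * x = x * y}"

lemma commutant_zero: "(0::'a::mult_zero) \<in> commutant X"
  by (simp add: commutant_def)

lemma commutant_add: "x \<in> commutant X \<Longrightarrow> y \<in> commutant X \<Longrightarrow> (x + y :: 'a::semiring) \<in> commutant X"
  by (simp add: commutant_def distrib_left distrib_right)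

lemma commutant_mult:
  "x \<in> commutant X \<Longrightarrow> y \<in> commutant X \<Longrightarrow> (x * y :: 'a::semigroup_mult) \<in> commutant X"
  by (simp add: commutant_def) (metis mult.assoc)

lemma closed_commutant: "closed (commutant (X :: 'a::real_normed_algebra set))"
proof -
  have "commutant X = (\<Inter>x\<in>X. {y. y * x = x * y})" by (auto simp: commutant_def)
  moreover have "closed {y. y * x = x * y}" for x :: 'a
    by (rule closed_Collect_eq) (auto intro!: continuous_intros)
  ultimately show ?thesis by auto
qed

context cstar
begin

lemma commutant_sc: "x \<in> commutant X \<Longrightarrow> sc c x \<in> commutant X"
  by (simp add: commutant_def sc_mult_left sc_mult_right)

lemma commutant_st:
  assumes "st ` X \<subseteq> X" and "x \<in> commutant X"
  shows "st x \<in> commutant X"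
  unfolding commutant_def
proof safe
  fix y assume "y \<in> X"
  then have "x * st y = st y * x" using assms by (auto simp: commutant_def)
  then show "st x * y = y * st x" by (metis st_mult st_st)
qed

end

section \<open>The Fejer kernel\<close>

lemma integral_shift_periodic:
  fixes f :: "real \<Rightarrow> 'b::banach"
  assumes cont: "continuous_on UNIV f" and periodic: "\<And>t. f (t + 2*pi) = f t"
    and \<alpha>: "0 \<le> \<alpha>" "\<alpha> \<le> 2*pi"
  shows "integral {0..2*pi} (\<lambda>t. f (t + \<alpha>)) = integral {0..2*pi} f"
proof -
  have int: "f integrable_on {a..b}" for a b
    by (rule integrable_continuous_interval[OF continuous_on_subset[OF cont]]) simp
  have "integral {0..2*pi} (\<lambda>t. f (t + \<alpha>)) = integral {\<alpha>..2*pi+\<alpha>} f"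
    using integral_shift_real_ivl[where f = f and a = \<alpha> and b = "2*pi+\<alpha>" and c = \<alpha>] by simp
  also have "\<dots> = integral {\<alpha>..2*pi} f + integral {2*pi..2*pi+\<alpha>} f"
    using Henstock_Kurzweil_Integration.integral_combine
        [where f = f and a = \<alpha> and c = "2*pi" and b = "2*pi+\<alpha>"] int \<alpha>
    by simp
  also have "integral {2*pi..2*pi+\<alpha>} f = integral {0..\<alpha>} f"
    using integral_shift_real_ivl[where f = f and a = "2*pi" and b = "2*pi+\<alpha>" and c = "2*pi"]
      periodic by simp
  also have "integral {\<alpha>..2*pi} f + integral {0..\<alpha>} f = integral {0..2*pi} f"
    using Henstock_Kurzweil_Integration.integral_combine
        [where f = f and a = 0 and c = \<alpha> and b = "2*pi"] int \<alpha>
    by (simp add: add.commute)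
  finally show ?thesis .
qed

lemma integral_cos_int_mult:
  "integral {0..2*pi} (\<lambda>t. cos (of_int m * t)) = (if m = 0 then 2*pi else 0)"
proof (cases "m = 0")
  case False
  have "((\<lambda>t. cos (of_int m * t)) has_integral
      (sin (of_int m * (2*pi)) / of_int m - sin (of_int m * 0) / of_int m)) {0..2*pi}"
    using False
    by (intro fundamental_theorem_of_calculus)
       (auto intro!: derivative_eq_intros
         simp: has_real_derivative_iff_has_vector_derivative[symmetric])
  moreover have "sin (of_int m * (2*pi)) = 0" using sin_int_2pin[of m] by (simp add: mult.commute)
  ultimately show ?thesis using False by (simp add: integral_unique)
qed simp

definition fejer_kernel :: "nat \<Rightarrow> real \<Rightarrow> real" where
  "fejer_kernel N t = (cmod (\<Sum>j\<le>N. cis t ^ j))\<^sup>2 / real (Suc N)"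

lemma fejer_kernel_nonneg: "0 \<le> fejer_kernel N t"
  by (simp add: fejer_kernel_def)

lemma continuous_on_fejer_kernel: "continuous_on S (fejer_kernel N)"
  unfolding fejer_kernel_def by (intro continuous_intros) auto

lemma of_real_fejer_kernel:
  "complex_of_real (fejer_kernel N t) =
     (\<Sum>j\<le>N. \<Sum>k\<le>N. complex_of_real (1 / real (Suc N)) * cis (- (of_int (int k - int j) * t)))"
proof -
  define D where "D = (\<Sum>j\<le>N. cis t ^ j)"
  have "complex_of_real (fejer_kernel N t) = complex_of_real (1 / real (Suc N)) * (D * cnj D)"
    unfolding fejer_kernel_def D_def[symmetric]
    by (simp add: complex_norm_square[symmetric] mult.commute)
  also have "D * cnj D = (\<Sum>j\<le>N. \<Sum>k\<le>N. cis t ^ j * cnj (cis t) ^ k)"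
    unfolding D_def by (simp only: sum_product cnj_sum complex_cnj_power)
  also have "\<dots> = (\<Sum>j\<le>N. \<Sum>k\<le>N. cis (- (of_int (int k - int j) * t)))"
    by (intro sum.cong refl) (simp add: Complex.DeMoivre cis_cnj cis_mult algebra_simps)
  finally show ?thesis by (simp only: sum_distrib_left)
qed

lemma fejer_kernel_eq_cos_sum:
  "fejer_kernel N t = (\<Sum>j\<le>N. \<Sum>k\<le>N. cos (of_int (int k - int j) * t) / real (Suc N))"
proof -
  have "fejer_kernel N t = Re (complex_of_real (fejer_kernel N t))" by simp
  then show ?thesis unfolding of_real_fejer_kernel by (simp add: Re_sum cos_minus)
qed

lemma integral_fejer_kernel: "integral {0..2*pi} (fejer_kernel N) = 2 * pi"
proof -
  have int: "(\<lambda>t. cos (of_int m * t) / real (Suc N)) integrable_on {0..2*pi}" for m :: int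
    by (intro integrable_continuous_interval continuous_intros) auto
  have "integral {0..2*pi} (fejer_kernel N)
      = (\<Sum>j\<le>N. \<Sum>k\<le>N. integral {0..2*pi} (\<lambda>t. cos (of_int (int k - int j) * t) / real (Suc N)))"
    unfolding fejer_kernel_eq_cos_sum
    by (subst integral_sum, simp, intro integrable_sum int, simp)
       (intro sum.cong refl integral_sum int, simp)
  also have "\<dots> = (\<Sum>j\<le>N. \<Sum>k\<le>N. if k = j then 2 * pi / real (Suc N) else 0)"
  proof (intro sum.cong refl)
    fix j k :: nat
    show "integral {0..2*pi} (\<lambda>t. cos (of_int (int k - int j) * t) / real (Suc N))
        = (if k = j then 2 * pi / real (Suc N) else 0)"
      using integral_cos_int_mult[of "int k - int j"] by (simp add: integral_divide)
  qed
  also have "\<dots> = 2 * pi" by simp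
  finally show ?thesis .
qed

text \<open>Away from \<open>0 \<equiv> 2\<pi>\<close> the kernel is \<open>O(1/N)\<close> uniformly, since the geometric sum
  is \<open>(z\<^bsup>N+1\<^esup> - 1)/(z - 1)\<close> with \<open>|z - 1|\<^sup>2 = 2 - 2 cos t\<close>.\<close>

lemma fejer_kernel_le:
  assumes \<delta>: "0 < \<delta>" "\<delta> \<le> pi" and t: "\<delta> \<le> t" "t \<le> 2*pi - \<delta>"
  shows "fejer_kernel N t \<le> 4 / (real (Suc N) * (2 - 2 * cos \<delta>))"
proof -
  have "cos t \<le> cos \<delta>"
  proof (cases "t \<le> pi")
    case False
    have "cos t = cos (2*pi - t)" by (simp add: cos_diff)
    then show ?thesis using cos_monotone_0_pi_le[of \<delta> "2*pi - t"] \<delta> t False by simp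
  qed (use cos_monotone_0_pi_le[of \<delta> t] \<delta> t in simp)
  moreover have "cos \<delta> < 1" using cos_monotone_0_pi[of 0 \<delta>] \<delta> by simp
  moreover have "(cmod (cis t - 1))\<^sup>2 = 2 - 2 * cos t"
    by (simp add: cmod_power2 power2_diff algebra_simps)
  ultimately have Q: "0 < 2 - 2 * cos \<delta>" "2 - 2 * cos \<delta> \<le> (cmod (cis t - 1))\<^sup>2"
    by simp_all
  then have "cis t \<noteq> 1" by auto
  then have "(\<Sum>j\<le>N. cis t ^ j) = (cis t ^ Suc N - 1) / (cis t - 1)"
    by (subst lessThan_Suc_atMost[symmetric], rule geometric_sum)
  moreover have "cmod (cis t ^ Suc N - 1) \<le> 2"
    using norm_triangle_ineq4[of "cis t ^ Suc N" 1] by (simp only: norm_power norm_cis) simp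
  ultimately have "cmod (\<Sum>j\<le>N. cis t ^ j) \<le> 2 / cmod (cis t - 1)"
    by (simp add: norm_divide divide_right_mono)
  then have "(cmod (\<Sum>j\<le>N. cis t ^ j))\<^sup>2 \<le> 4 / (cmod (cis t - 1))\<^sup>2"
    using power_mono[of _ _ 2] by (fastforce simp: power_divide)
  also have "\<dots> \<le> 4 / (2 - 2 * cos \<delta>)" using Q by (simp add: frac_le)
  finally have "(cmod (\<Sum>j\<le>N. cis t ^ j))\<^sup>2 / real (Suc N) \<le> 4 / (2 - 2 * cos \<delta>) / real (Suc N)"
    by (rule divide_right_mono) simp
  then show ?thesis by (simp add: fejer_kernel_def divide_divide_eq_left mult.commute)
qed

lemma fejer_mean_diff_eq:
  fixes g :: "real \<Rightarrow> 'b::banach"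
  assumes "continuous_on {0..2*pi} g"
  shows "integral {0..2*pi} (\<lambda>t. fejer_kernel N t *\<^sub>R g t) /\<^sub>R (2*pi) - x
    = integral {0..2*pi} (\<lambda>t. fejer_kernel N t *\<^sub>R (g t - x)) /\<^sub>R (2*pi)"
proof -
  have int: "(\<lambda>t. fejer_kernel N t *\<^sub>R g t) integrable_on {0..2*pi}"
    "fejer_kernel N integrable_on {0..2*pi}"
    by (auto intro!: integrable_continuous_interval continuous_intros assms
        continuous_on_fejer_kernel)
  have "((\<lambda>t. fejer_kernel N t *\<^sub>R x) has_integral (2 * pi) *\<^sub>R x) {0..2*pi}"
    using has_integral_scaleR_left[OF integrable_integral[OF int(2)], of x]
    by (simp add: integral_fejer_kernel)
  then show ?thesis
    using integral_diff[OF int(1) integrable_on_scaleR_left[OF int(2)], of x]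
    by (simp add: scaleR_diff_right integral_unique)
qed

lemma norm_fejer_integral_diff_le:
  fixes g :: "real \<Rightarrow> 'b::banach"
  assumes cont: "continuous_on {0..2*pi} g"
    and \<delta>: "0 < \<delta>" "\<delta> \<le> pi"
    and near: "\<And>t. t \<in> {0..2*pi} \<Longrightarrow> t < \<delta> \<or> 2*pi - \<delta> < t \<Longrightarrow> norm (g t - x) \<le> \<eta>"
    and bound: "\<And>t. t \<in> {0..2*pi} \<Longrightarrow> norm (g t - x) \<le> B"
  shows "norm (integral {0..2*pi} (\<lambda>t. fejer_kernel N t *\<^sub>R (g t - x)))
    \<le> 2 * pi * (\<eta> + B * (4 / (real (Suc N) * (2 - 2 * cos \<delta>))))"
    (is "_ \<le> 2 * pi * (\<eta> + B * ?C)")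
proof -
  let ?F = "fejer_kernel N"
  have C: "0 \<le> ?C" using cos_le_one[of \<delta>] by simp
  have \<eta>: "0 \<le> \<eta>" and B: "0 \<le> B"
    using near[of 0] bound[of 0] \<delta> by (auto intro: order_trans[OF norm_ge_zero])
  have pointwise: "norm (?F t *\<^sub>R (g t - x)) \<le> \<eta> * ?F t + B * ?C" if t: "t \<in> {0..2*pi}" for t
  proof (cases "t < \<delta> \<or> 2*pi - \<delta> < t")
    case True
    then have "?F t * norm (g t - x) \<le> ?F t * \<eta>"
      using near[OF t] fejer_kernel_nonneg by (intro mult_left_mono)
    then show ?thesis
      using fejer_kernel_nonneg[of N t] B C by (simp add: mult.commute add_increasing2)
  next
    case False
    then have "?F t * norm (g t - x) \<le> ?C * B"
      using fejer_kernel_le[OF \<delta>, of t N] bound[OF t] fejer_kernel_nonneg by (intro mult_mono) auto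
    then show ?thesis using fejer_kernel_nonneg[of N t] \<eta> by (simp add: mult.commute add_increasing)
  qed
  have "norm (integral {0..2*pi} (\<lambda>t. ?F t *\<^sub>R (g t - x)))
      \<le> integral {0..2*pi} (\<lambda>t. \<eta> * ?F t + B * ?C)"
    using pointwise
    by (intro integral_norm_bound_integral)
       (auto intro!: integrable_continuous_interval continuous_intros cont
         continuous_on_fejer_kernel)
  also have "integral {0..2*pi} (\<lambda>t. \<eta> * ?F t + B * ?C)
      = integral {0..2*pi} (\<lambda>t. \<eta> * ?F t) + integral {0..2*pi} (\<lambda>t. B * ?C)"
    by (intro integral_add integrable_continuous_interval continuous_intros
        continuous_on_fejer_kernel)
  also have "\<dots> = 2 * pi * (\<eta> + B * ?C)"
    using integral_fejer_kernel[of N] by (simp add: algebra_simps)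
  finally show ?thesis .
qed

lemma fejer_mean_tendsto:
  fixes g :: "real \<Rightarrow> 'b::banach"
  assumes cont: "continuous_on {0..2*pi} g" and periodic: "g (2*pi) = g 0"
  shows "(\<lambda>N. integral {0..2*pi} (\<lambda>t. fejer_kernel N t *\<^sub>R g t) /\<^sub>R (2*pi)) \<longlonglongrightarrow> g 0"
proof (rule tendstoI)
  fix \<epsilon> :: real assume \<epsilon>: "0 < \<epsilon>"
  have ends: "0 \<in> {0..2*pi}" "2*pi \<in> {0..2*pi}" by simp_all
  have "bounded ((\<lambda>t. g t - g 0) ` {0..2*pi})"
    by (intro compact_imp_bounded compact_continuous_image continuous_intros cont compact_Icc)
  then obtain B where B: "\<And>t. t \<in> {0..2*pi} \<Longrightarrow> norm (g t - g 0) \<le> B"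
    unfolding bounded_iff by blast
  obtain d0 where d0: "0 < d0"
    "\<And>t. t \<in> {0..2*pi} \<Longrightarrow> dist t 0 < d0 \<Longrightarrow> dist (g t) (g 0) < \<epsilon> / 2"
    using cont ends(1) \<epsilon> unfolding continuous_on_iff by (meson half_gt_zero)
  obtain d1 where d1: "0 < d1"
    "\<And>t. t \<in> {0..2*pi} \<Longrightarrow> dist t (2*pi) < d1 \<Longrightarrow> dist (g t) (g (2*pi)) < \<epsilon> / 2"
    using cont ends(2) \<epsilon> unfolding continuous_on_iff by (meson half_gt_zero)
  define \<delta> where "\<delta> = min (min d0 d1) pi"
  have \<delta>: "0 < \<delta>" "\<delta> \<le> pi" using d0 d1 by (auto simp: \<delta>_def)
  have near: "norm (g t - g 0) \<le> \<epsilon> / 2" if "t \<in> {0..2*pi}" "t < \<delta> \<or> 2*pi - \<delta> < t" for t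
    using that d0(2)[of t] d1(2)[of t] periodic
    by (fastforce simp: \<delta>_def dist_real_def dist_norm)
  have "(\<lambda>N. B * (4 / (real (Suc N) * (2 - 2 * cos \<delta>)))) \<longlonglongrightarrow> 0"
    using LIMSEQ_Suc[OF lim_const_over_n[of "B * (4 / (2 - 2 * cos \<delta>))"]]
    by (simp add: mult.commute)
  then have "\<forall>\<^sub>F N in sequentially. B * (4 / (real (Suc N) * (2 - 2 * cos \<delta>))) < \<epsilon> / 2"
    using \<epsilon> by (intro order_tendstoD(2)) auto
  then show "\<forall>\<^sub>F N in sequentially.
      dist (integral {0..2*pi} (\<lambda>t. fejer_kernel N t *\<^sub>R g t) /\<^sub>R (2*pi)) (g 0) < \<epsilon>"
  proof eventually_elim
    case (elim N)
    have "dist (integral {0..2*pi} (\<lambda>t. fejer_kernel N t *\<^sub>R g t) /\<^sub>R (2*pi)) (g 0)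
        = norm (integral {0..2*pi} (\<lambda>t. fejer_kernel N t *\<^sub>R (g t - g 0))) / (2*pi)"
      unfolding dist_norm fejer_mean_diff_eq[OF cont]
      by (simp only: norm_scaleR) (simp add: field_simps)
    also have "\<dots> \<le> \<epsilon> / 2 + B * (4 / (real (Suc N) * (2 - 2 * cos \<delta>)))"
      using norm_fejer_integral_diff_le[OF cont \<delta> near B, of N]
      by (simp add: divide_le_eq mult.commute)
    also have "\<dots> < \<epsilon>" using elim by simp
    finally show ?case .
  qed
qed

lemma one_in_circle: "1 \<in> circle"
  and cnj_in_circle: "t \<in> circle \<Longrightarrow> cnj t \<in> circle"
  and cis_in_circle: "cis x \<in> circle"
  by (simp_all add: circle_def)

locale cstar_dynamical = cstar sc st
  for sc :: "complex \<Rightarrow> 'a::{real_normed_algebra,banach} \<Rightarrow> 'a" and st :: "'a \<Rightarrow> 'a" +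
  fixes \<omega> :: "complex \<Rightarrow> 'a \<Rightarrow> 'a"
  assumes dynamical_system: "cstar_dynamical_system sc st \<omega>"
begin

lemma star_automorphism_\<omega>: "t \<in> circle \<Longrightarrow> star_automorphism sc st (\<omega> t)"
  using dynamical_system by (simp add: cstar_dynamical_system_def)

lemma star_hom_\<omega>: "t \<in> circle \<Longrightarrow> star_hom sc st (\<omega> t)"
  by (rule star_automorphism_imp_star_hom[OF star_automorphism_\<omega>])

lemma \<omega>_mult: "t \<in> circle \<Longrightarrow> \<omega> t (x * y) = \<omega> t x * \<omega> t y"
  and \<omega>_sc: "t \<in> circle \<Longrightarrow> \<omega> t (sc c x) = sc c (\<omega> t x)"
  and \<omega>_st: "t \<in> circle \<Longrightarrow> \<omega> t (st x) = st (\<omega> t x)"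
  using star_hom_\<omega> by (simp_all add: star_hom_def)

lemma \<omega>_group: "s \<in> circle \<Longrightarrow> t \<in> circle \<Longrightarrow> \<omega> (s * t) x = \<omega> s (\<omega> t x)"
  using dynamical_system by (simp add: cstar_dynamical_system_def)

lemma continuous_on_\<omega>: "continuous_on circle (\<lambda>t. \<omega> t x)"
  using dynamical_system by (simp add: cstar_dynamical_system_def)

lemma \<omega>_one: "\<omega> 1 x = x"
proof -
  have "\<omega> 1 (\<omega> 1 x) = \<omega> 1 x" using \<omega>_group[OF one_in_circle one_in_circle] by simp
  then show ?thesis
    using star_automorphism_\<omega>[OF one_in_circle]
    by (auto simp: star_automorphism_def bij_def inj_def)
qed

lemma \<omega>_cnj:
  assumes "t \<in> circle"
  shows "\<omega> t (\<omega> (cnj t) x) = x"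
proof -
  have "t * cnj t = 1" using assms complex_norm_square[of t] by (simp add: circle_def)
  then show ?thesis using \<omega>_group[OF assms cnj_in_circle[OF assms], of x] by (simp add: \<omega>_one)
qed

lemma bounded_linear_\<omega>: "t \<in> circle \<Longrightarrow> bounded_linear (\<omega> t)"
  by (rule bounded_linear_star_hom[OF star_hom_\<omega>])

lemma T_invariant_commutant:
  assumes "T_invariant \<omega> X"
  shows "T_invariant \<omega> (commutant X)"
  unfolding T_invariant_def commutant_def
proof safe
  fix t x y assume t: "t \<in> circle" and x: "\<forall>y\<in>X. x * y = y * x" and y: "y \<in> X"
  have "\<omega> (cnj t) y \<in> X" using assms t y by (simp add: T_invariant_def cnj_in_circle)
  then have "\<omega> t (x * \<omega> (cnj t) y) = \<omega> t (\<omega> (cnj t) y * x)" using x by simp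
  then show "\<omega> t x * y = y * \<omega> t x" by (simp add: \<omega>_mult \<omega>_cnj t)
qed

lemma inter_bicommutant:
  assumes "st ` M \<subseteq> M" and "T_invariant \<omega> M"
  defines "Z \<equiv> commutant M \<inter> commutant (commutant M)"
  shows "star_subalgebra sc st Z" and "abelian Z" and "T_invariant \<omega> Z"
proof -
  have st1: "st ` commutant M \<subseteq> commutant M" using commutant_st[OF assms(1)] by blast
  show "star_subalgebra sc st Z"
    unfolding star_subalgebra_def subalgebra_def Z_def
    by (auto simp: commutant_zero commutant_add commutant_sc commutant_mult
        commutant_st[OF assms(1)] commutant_st[OF st1])
  show "abelian Z" unfolding abelian_def Z_def commutant_def by blast
  have "T_invariant \<omega> (commutant M)" by (rule T_invariant_commutant[OF assms(2)])
  then show "T_invariant \<omega> Z"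
    using T_invariant_commutant by (auto simp: T_invariant_def Z_def)
qed

definition orbit :: "'a \<Rightarrow> real \<Rightarrow> 'a" where
  "orbit x t = \<omega> (cis t) x"

definition fourier_coeff :: "'a \<Rightarrow> int \<Rightarrow> 'a" where
  "fourier_coeff x m = integral {0..2*pi} (\<lambda>t. sc (cis (- (of_int m * t))) (orbit x t))"

definition unimodular_eigenvector :: "'a \<Rightarrow> bool" where
  "unimodular_eigenvector y \<longleftrightarrow> (\<forall>t\<in>circle. \<exists>c. cmod c = 1 \<and> \<omega> t y = sc c y)"

lemma continuous_on_orbit: "continuous_on S (orbit x)"
  unfolding orbit_def
  by (rule continuous_on_compose2[OF continuous_on_\<omega>, of _ cis])
     (auto intro!: continuous_intros simp: cis_in_circle)

lemma orbit_0: "orbit x 0 = x"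
  and orbit_2pi: "orbit x (2*pi) = x"
  by (simp_all add: orbit_def \<omega>_one)

lemma continuous_on_fourier_integrand:
  "continuous_on S (\<lambda>t. sc (cis (- (of_int m * t))) (orbit x t))"
  by (intro continuous_intros continuous_on_orbit)

lemma fourier_integrand_integrable:
  "(\<lambda>t. sc (cis (- (of_int m * t))) (orbit x t)) integrable_on {a..b}"
  by (rule integrable_continuous_interval[OF continuous_on_fourier_integrand])

lemma fourier_coeff_commutant:
  assumes "T_invariant \<omega> X" and x: "x \<in> commutant X"
  shows "fourier_coeff x m \<in> commutant X"
  unfolding commutant_def
proof safe
  fix a assume a: "a \<in> X"
  define L where "L v = v * a - a * v" for v
  have "bounded_linear L" unfolding L_def
    by (intro bounded_linear_sub bounded_linear_mult_left bounded_linear_mult_right)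
  moreover have zero: "L (sc (cis (- (of_int m * t))) (orbit x t)) = 0" for t
  proof -
    have "orbit x t \<in> commutant X"
      using T_invariant_commutant[OF assms(1)] x
      by (simp add: T_invariant_def orbit_def cis_in_circle)
    then have "sc (cis (- (of_int m * t))) (orbit x t) \<in> commutant X" by (rule commutant_sc)
    then show ?thesis using a by (simp add: L_def commutant_def)
  qed
  ultimately have "L (fourier_coeff x m) = 0"
    unfolding fourier_coeff_def
    by (simp add: integral_linear[OF fourier_integrand_integrable, symmetric] o_def)
  then show "fourier_coeff x m * a = a * fourier_coeff x m" by (simp add: L_def)
qed

lemma \<omega>_cis_fourier_coeff:
  assumes \<alpha>: "0 \<le> \<alpha>" "\<alpha> \<le> 2*pi"
  shows "\<omega> (cis \<alpha>) (fourier_coeff x m) = sc (cis (of_int m * \<alpha>)) (fourier_coeff x m)"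
proof -
  define f where "f t = sc (cis (- (of_int m * t))) (orbit x t)" for t
  have f_cont: "continuous_on UNIV f" by (simp add: f_def continuous_on_fourier_integrand)
  have periodic: "f (t + 2*pi) = f t" for t
  proof -
    have "cis (- (of_int m * (t + 2*pi))) = cis (- (of_int m * t)) * cis (2 * pi * of_int (- m))"
      by (simp add: cis_mult algebra_simps)
    also have "cis (2 * pi * of_int (- m)) = 1" by (rule cis_multiple_2pi) simp
    finally have "cis (- (of_int m * (t + 2*pi))) = cis (- (of_int m * t))" by simp
    moreover have "cis (t + 2*pi) = cis t" by (simp add: cis_mult[symmetric])
    ultimately show ?thesis by (simp add: f_def orbit_def)
  qed
  have rotate: "\<omega> (cis \<alpha>) (f t) = sc (cis (of_int m * \<alpha>)) (f (t + \<alpha>))" for t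
  proof -
    have "\<omega> (cis \<alpha>) (orbit x t) = orbit x (t + \<alpha>)"
      using \<omega>_group[OF cis_in_circle cis_in_circle] by (simp add: orbit_def cis_mult add.commute)
    moreover have "cis (of_int m * \<alpha>) * cis (- (of_int m * (t + \<alpha>))) = cis (- (of_int m * t))"
      by (simp add: cis_mult algebra_simps)
    ultimately show ?thesis by (simp add: f_def \<omega>_sc cis_in_circle sc_sc)
  qed
  have "\<omega> (cis \<alpha>) (fourier_coeff x m) = integral {0..2*pi} (\<lambda>t. \<omega> (cis \<alpha>) (f t))"
    unfolding fourier_coeff_def f_def
    using integral_linear[OF fourier_integrand_integrable bounded_linear_\<omega>[OF cis_in_circle]]
    by (simp add: o_def)
  also have "\<dots> = sc (cis (of_int m * \<alpha>)) (integral {0..2*pi} (\<lambda>t. f (t + \<alpha>)))"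
  proof -
    have "(\<lambda>t. f (t + \<alpha>)) integrable_on {0..2*pi}"
      by (intro integrable_continuous_interval continuous_on_compose2[OF f_cont]
          continuous_intros) auto
    then show ?thesis
      unfolding rotate using integral_linear[OF _ bounded_linear_sc] by (simp add: o_def)
  qed
  also have "integral {0..2*pi} (\<lambda>t. f (t + \<alpha>)) = fourier_coeff x m"
    unfolding fourier_coeff_def f_def[symmetric]
    by (rule integral_shift_periodic[OF f_cont periodic \<alpha>])
  finally show ?thesis .
qed

lemma fourier_coeff_unimodular_eigenvector: "unimodular_eigenvector (fourier_coeff x m)"
  unfolding unimodular_eigenvector_def
proof
  fix s assume "s \<in> circle"
  then have "s = cis (Arg2pi s)"
    using Arg2pi[of s] by (simp add: is_Arg_def circle_def cis_conv_exp)
  then show "\<exists>c. cmod c = 1 \<and> \<omega> s (fourier_coeff x m) = sc c (fourier_coeff x m)"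
    using \<omega>_cis_fourier_coeff[of "Arg2pi s" x m] Arg2pi_ge_0[of s] Arg2pi_lt_2pi[of s]
    by (metis less_eq_real_def norm_cis)
qed

lemma fejer_integral_orbit_eq:
  "integral {0..2*pi} (\<lambda>t. fejer_kernel N t *\<^sub>R orbit x t)
     = (\<Sum>j\<le>N. \<Sum>k\<le>N. (1 / real (Suc N)) *\<^sub>R fourier_coeff x (int k - int j))"
proof -
  define h where
    "h j k = (\<lambda>t. (1 / real (Suc N)) *\<^sub>R sc (cis (- (of_int (int k - int j) * t))) (orbit x t))"
    for j k :: nat
  have int: "h j k integrable_on {0..2*pi}" for j k
    unfolding h_def by (intro integrable_cmul fourier_integrand_integrable)
  have "fejer_kernel N t *\<^sub>R orbit x t = (\<Sum>j\<le>N. \<Sum>k\<le>N. h j k t)" for t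
  proof -
    have "fejer_kernel N t *\<^sub>R orbit x t = sc (complex_of_real (fejer_kernel N t)) (orbit x t)"
      by (simp add: sc_of_real)
    then show ?thesis
      unfolding of_real_fejer_kernel h_def by (simp only: sc_sum_left sc_of_real sc_sc[symmetric])
  qed
  then have "integral {0..2*pi} (\<lambda>t. fejer_kernel N t *\<^sub>R orbit x t)
      = (\<Sum>j\<le>N. \<Sum>k\<le>N. integral {0..2*pi} (h j k))"
    by (simp add: integral_sum integrable_sum int)
  also have "\<dots> = (\<Sum>j\<le>N. \<Sum>k\<le>N. (1 / real (Suc N)) *\<^sub>R fourier_coeff x (int k - int j))"
    by (simp add: h_def fourier_coeff_def)
  finally show ?thesis .
qed

end

section \<open>Maximal abelian invariant *-subalgebras\<close>

locale maximal_invariant = cstar_dynamical sc st \<omega>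
  for sc :: "complex \<Rightarrow> 'a::{real_normed_algebra,banach} \<Rightarrow> 'a" and st \<omega> +
  fixes A :: "'a set"
  assumes maximal: "maximal_abelian_invariant_star_subalgebra sc st \<omega> A"
begin

lemma A_star_subalgebra: "star_subalgebra sc st A"
  and A_abelian: "abelian A"
  and A_T_invariant: "T_invariant \<omega> A"
  using maximal by (simp_all add: maximal_abelian_invariant_star_subalgebra_def)

lemma A_subalgebra: "subalgebra sc A"
  and st_image_A: "st ` A \<subseteq> A"
  using A_star_subalgebra by (auto simp: star_subalgebra_def)

lemma subset_A_if_abelian_invariant:
  assumes "A \<subseteq> M" and "st ` M \<subseteq> M" and "T_invariant \<omega> M" and "abelian M"
  shows "M \<subseteq> A"
proof -
  define Z where "Z = commutant M \<inter> commutant (commutant M)"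
  have "M \<subseteq> Z" using assms(4) by (auto simp: Z_def abelian_def commutant_def)
  moreover have "Z = A"
    using maximal inter_bicommutant[OF assms(2,3)] assms(1) \<open>M \<subseteq> Z\<close>
    unfolding maximal_abelian_invariant_star_subalgebra_def Z_def by blast
  ultimately show ?thesis by simp
qed

lemma inter_bicommutant_A: "commutant A \<inter> commutant (commutant A) = A"
proof -
  have "A \<subseteq> commutant A \<inter> commutant (commutant A)"
    using A_abelian by (auto simp: abelian_def commutant_def)
  then show ?thesis
    using maximal inter_bicommutant[OF st_image_A A_T_invariant]
    unfolding maximal_abelian_invariant_star_subalgebra_def by blast
qed

lemma closed_A: "closed A"
  by (metis inter_bicommutant_A closed_Int closed_commutant)

lemma fixed_selfadjoint_mem_A:
  assumes "p \<in> commutant A" and "st p = p" and "\<forall>t\<in>circle. \<omega> t p = p"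
  shows "p \<in> A"
proof -
  have "insert p A \<subseteq> A"
  proof (rule subset_A_if_abelian_invariant)
    show "st ` insert p A \<subseteq> insert p A" using assms(2) st_image_A by auto
    show "T_invariant \<omega> (insert p A)" using assms(3) A_T_invariant by (auto simp: T_invariant_def)
    show "abelian (insert p A)"
      using assms(1) A_abelian by (auto simp: abelian_def commutant_def)
  qed auto
  then show ?thesis by blast
qed

lemma unimodular_eigenvector_st: "unimodular_eigenvector y \<Longrightarrow> unimodular_eigenvector (st y)"
  unfolding unimodular_eigenvector_def by (metis \<omega>_st st_sc complex_mod_cnj)

lemma unimodular_eigenvector_st_mult_self_fixed:
  assumes "unimodular_eigenvector y" and "t \<in> circle"
  shows "\<omega> t (st y * y) = st y * y"
proof -
  obtain c where c: "cmod c = 1" "\<omega> t y = sc c y"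
    using assms by (auto simp: unimodular_eigenvector_def)
  then have "c * cnj c = 1" using complex_norm_square[of c] by simp
  then show ?thesis
    using c(2) by (simp add: \<omega>_mult \<omega>_st assms(2) st_sc sc_mult_left sc_mult_right sc_sc sc_one)
qed

text \<open>\<open>p = y\<^sup>* y\<close> and \<open>q = y y\<^sup>*\<close> lie in \<open>A\<close>, hence commute with \<open>y\<close> and \<open>y\<^sup>*\<close>; this gives
  \<open>pq = p\<^sup>2\<close>, \<open>qp = q\<^sup>2\<close> and \<open>pq = (qp)\<^sup>* = q\<^sup>2\<close>, so \<open>(p - q)\<^sup>2 = 0\<close>.\<close>

lemma unimodular_eigenvector_normal:
  assumes y: "y \<in> commutant A" and ev: "unimodular_eigenvector y"
  shows "y * st y = st y * y"
proof -
  have ys: "st y \<in> commutant A" by (rule commutant_st[OF st_image_A y])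
  define p where "p = st y * y"
  define q where "q = y * st y"
  have "p \<in> A"
    unfolding p_def using commutant_mult[OF ys y] unimodular_eigenvector_st_mult_self_fixed[OF ev]
    by (intro fixed_selfadjoint_mem_A) (auto simp: st_mult st_st)
  moreover have "q \<in> A"
    unfolding q_def using commutant_mult[OF y ys]
      unimodular_eigenvector_st_mult_self_fixed[OF unimodular_eigenvector_st[OF ev]]
    by (intro fixed_selfadjoint_mem_A) (auto simp: st_mult st_st)
  ultimately have yp: "y * p = p * y" and yq: "y * q = q * y"
    and sp: "st y * p = p * st y"
    using y ys by (auto simp: commutant_def)
  have pq: "p * q = p * p" by (metis p_def q_def yq mult.assoc)
  have qp: "q * p = q * q" by (metis p_def q_def sp mult.assoc)
  have "p * q = q * q"
    by (metis qp p_def q_def st_mult st_st mult.assoc)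
  then have "(p - q) * (p - q) = 0" using pq qp by (simp add: algebra_simps)
  moreover have "st (p - q) = p - q" by (simp add: p_def q_def st_diff st_mult st_st)
  ultimately have "p - q = 0" by (rule selfadjoint_square_eq_zero[rotated])
  then show ?thesis by (simp add: p_def q_def)
qed

lemma unimodular_eigenvector_mem_A:
  assumes y: "y \<in> commutant A" and ev: "unimodular_eigenvector y"
  shows "y \<in> A"
proof -
  define M where "M = A \<union> range (\<lambda>c. sc c y) \<union> range (\<lambda>c. sc c (st y))"
  have "M \<subseteq> A"
  proof (rule subset_A_if_abelian_invariant)
    show "A \<subseteq> M" by (auto simp: M_def)
    show "st ` M \<subseteq> M" using st_image_A by (auto simp: M_def st_sc st_st)
    show "T_invariant \<omega> M"
      using ev unimodular_eigenvector_st[OF ev] A_T_invariant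
      unfolding T_invariant_def unimodular_eigenvector_def M_def
      by (auto simp: \<omega>_sc sc_sc)
    have ys: "st y \<in> commutant A" by (rule commutant_st[OF st_image_A y])
    have "A \<subseteq> commutant M"
      using A_abelian commutant_sc[OF y] commutant_sc[OF ys]
      by (auto simp: M_def abelian_def commutant_def)
    moreover have "sc c z * sc d w = sc d w * sc c z" if "z \<in> {y, st y}" "w \<in> {y, st y}" for c d z w
    proof -
      have "z * w = w * z" using that unimodular_eigenvector_normal[OF y ev] by auto
      then show ?thesis by (simp add: sc_mult_left sc_mult_right sc_sc mult.commute)
    qed
    ultimately show "abelian M"
      unfolding abelian_def by (auto simp: M_def commutant_def)
  qed
  moreover have "y \<in> M" unfolding M_def using sc_one[of y] by (metis UnI1 UnI2 rangeI)
  ultimately show ?thesis by blast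
qed

lemma fourier_coeff_mem_A: "x \<in> commutant A \<Longrightarrow> fourier_coeff x m \<in> A"
  by (intro unimodular_eigenvector_mem_A fourier_coeff_commutant[OF A_T_invariant]
      fourier_coeff_unimodular_eigenvector)

lemma fejer_mean_mem_A:
  assumes "x \<in> commutant A"
  shows "integral {0..2*pi} (\<lambda>t. fejer_kernel N t *\<^sub>R orbit x t) /\<^sub>R (2*pi) \<in> A"
proof -
  have sum_mem: "finite I \<Longrightarrow> (\<And>i. i \<in> I \<Longrightarrow> f i \<in> A) \<Longrightarrow> sum f I \<in> A" for f and I :: "nat set"
    by (induction I rule: finite_induct) (use A_subalgebra in \<open>auto simp: subalgebra_def\<close>)
  have scaleR_mem: "a \<in> A \<Longrightarrow> r *\<^sub>R a \<in> A" for r a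
    using A_subalgebra by (auto simp: subalgebra_def simp flip: sc_of_real)
  show ?thesis
    unfolding fejer_integral_orbit_eq
    by (intro scaleR_mem sum_mem fourier_coeff_mem_A assms) auto
qed

lemma commutant_subset_A: "commutant A \<subseteq> A"
proof
  fix x assume x: "x \<in> commutant A"
  have "(\<lambda>N. integral {0..2*pi} (\<lambda>t. fejer_kernel N t *\<^sub>R orbit x t) /\<^sub>R (2*pi)) \<longlonglongrightarrow> x"
    using fejer_mean_tendsto[OF continuous_on_orbit, of x] by (simp add: orbit_0 orbit_2pi)
  then show "x \<in> A"
    by (rule closed_sequentially[OF closed_A fejer_mean_mem_A[OF x]])
qed

end

theorem theorem2p7:
  fixes sc :: "complex \<Rightarrow> 'a::{real_normed_algebra,banach} \<Rightarrow> 'a"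
    and st :: "'a \<Rightarrow> 'a"
    and \<omega> :: "complex \<Rightarrow> 'a \<Rightarrow> 'a"
    and A :: "'a set"
  assumes "cstar_dynamical_system sc st \<omega>"
    and "maximal_abelian_invariant_star_subalgebra sc st \<omega> A"
  shows "maximal_abelian_subalgebra sc A"
proof -
  interpret maximal_invariant sc st \<omega> A
    using assms by unfold_locales (simp_all add: cstar_dynamical_system_def)
  have "C \<subseteq> A" if "abelian C" and "A \<subseteq> C" for C
    using that commutant_subset_A unfolding abelian_def commutant_def by blast
  then show ?thesis
    using A_subalgebra A_abelian by (auto simp: maximal_abelian_subalgebra_def)
qed

end
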